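(* Let $\xi$ be a real random variable such that either $\mathbb{E}\xi^2=\infty$, or $\mathbb{E}\xi^2<\infty$ and $\mathbb{E}\xi\neq 0$. For each $n\ge1$ let $A_n$ be an $n\times n$ random matrix whose entries are i.i.d. copies of $\xi$, all matrices $A_n$ being defined on a common probability space. Let $\varepsilon\in(0,1)$. For each $n$, let $m_n$ denote the minimum of $\|\tilde A\|$ over all $n\times n$ real matrices $\tilde A$ for which there exist $I,J\subset[n]$ with $|I|,|J|\le\varepsilon n$ such that $\tilde A_{ij}=(A_n)_{ij}$ for all $(i,j)\notin I\times J$ (i.e. $\tilde A$ is obtained from $A_n$ by arbitrarily modifying the entries of a submatrix of size at most $\varepsilon n\times\varepsilon n$). Then $$\frac{m_n}{\sqrt n}\to\infty\quad\text{as } n\to\infty\quad\text{almost surely.}$$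
   Context: $[n]=\{1,\dots,n\}$. $\|\cdot\|$ denotes the operator norm (Euclidean norm to Euclidean norm). *)

theory Defs
  imports "HOL-Probability.Probability"
begin

text \<open>Real n x n matrices are represented as functions nat => nat => real,
  indexed by [n] = {1..n}; entries outside this range are irrelevant.\<close>

definition op_norm :: "nat \<Rightarrow> (nat \<Rightarrow> nat \<Rightarrow> real) \<Rightarrow> real" where
  "op_norm n B =
     (SUP x \<in> {x :: nat \<Rightarrow> real. (\<Sum>j\<in>{1..n}. (x j)\<^sup>2) \<le> 1}.
        sqrt (\<Sum>i\<in>{1..n}. (\<Sum>j\<in>{1..n}. B i j * x j)\<^sup>2))"

definition modifications :: "nat \<Rightarrow> real \<Rightarrow> (nat \<Rightarrow> nat \<Rightarrow> real) \<Rightarrow> (nat \<Rightarrow> nat \<Rightarrow> real) set" where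
  "modifications n eps B =
     {C. \<exists>I J. I \<subseteq> {1..n} \<and> J \<subseteq> {1..n} \<and>
            real (card I) \<le> eps * real n \<and> real (card J) \<le> eps * real n \<and>
            (\<forall>i\<in>{1..n}. \<forall>j\<in>{1..n}. (i, j) \<notin> I \<times> J \<longrightarrow> C i j = B i j)}"

definition min_mod_norm :: "nat \<Rightarrow> real \<Rightarrow> (nat \<Rightarrow> nat \<Rightarrow> real) \<Rightarrow> real" where
  "min_mod_norm n eps B = Inf (op_norm n ` modifications n eps B)"

end

theory Submission
  imports Defs
begin

text \<open>Fix a measurable h with E h(\<xi>)^2 < \<infinity> and put \<nu> = E h(\<xi>). The column sums of h(A_n) are
  independent with mean n \<nu> and variance O(n), so the sum over the columns of their deviations
  from n \<nu> has mean O(n^(3/2)) and variance O(n^2). Chebyshev's inequality and Borel-Cantelli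
  show that almost surely this total deviation is eventually below (1 - \<epsilon>) \<nu> n^2 / 2.
  A modification leaves at least (1 - \<epsilon>) n columns untouched, and on these the column sums
  of h(A_n) then still add up to more than (1 - \<epsilon>) \<nu> n^2 / 2.

  If E \<xi> \<noteq> 0, take h(x) = sgn(E \<xi>) x: pairing the modified matrix with the normalised
  indicator of the untouched columns and with the all-ones vector shows that its operator norm
  is at least (1 - \<epsilon>) \<nu> n / 2. If E \<xi>^2 = \<infinity>, take h(x) = min(x^2, T), for which \<nu> is as
  large as we like when T is large: some untouched column has squared length at least
  (1 - \<epsilon>) \<nu> n / 2.\<close>

definition column_deviation ::
    "(real \<Rightarrow> real) \<Rightarrow> real \<Rightarrow> nat \<Rightarrow> (nat \<Rightarrow> nat \<Rightarrow> real) \<Rightarrow> real" where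
  "column_deviation h \<nu> n B = (\<Sum>j\<in>{1..n}. \<bar>(\<Sum>i\<in>{1..n}. h (B i j)) - real n * \<nu>\<bar>)"

lemma column_deviation_nonneg: "0 \<le> column_deviation h \<nu> n B"
  unfolding column_deviation_def by (simp add: sum_nonneg)

section \<open>Operator norm of modified matrices\<close>

lemma op_norm_bdd_above:
  "bdd_above ((\<lambda>x. sqrt (\<Sum>i\<in>{1..n}. (\<Sum>j\<in>{1..n}. B i j * x j)\<^sup>2)) `
      {x :: nat \<Rightarrow> real. (\<Sum>j\<in>{1..n}. (x j)\<^sup>2) \<le> 1})"
proof (rule bdd_aboveI2)
  fix x :: "nat \<Rightarrow> real" assume "x \<in> {x. (\<Sum>j\<in>{1..n}. (x j)\<^sup>2) \<le> 1}"
  then have x: "(\<Sum>j\<in>{1..n}. (x j)\<^sup>2) \<le> 1" by simp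
  have "(\<Sum>j\<in>{1..n}. B i j * x j)\<^sup>2 \<le> (\<Sum>j\<in>{1..n}. (B i j)\<^sup>2)" for i
  proof -
    have "(\<Sum>j\<in>{1..n}. B i j * x j)\<^sup>2 \<le> (\<Sum>j\<in>{1..n}. (B i j)\<^sup>2) * (\<Sum>j\<in>{1..n}. (x j)\<^sup>2)"
      by (rule Cauchy_Schwarz_ineq_sum)
    also have "\<dots> \<le> (\<Sum>j\<in>{1..n}. (B i j)\<^sup>2)"
      using mult_left_mono[OF x] by (simp add: sum_nonneg)
    finally show ?thesis .
  qed
  then show "sqrt (\<Sum>i\<in>{1..n}. (\<Sum>j\<in>{1..n}. B i j * x j)\<^sup>2)
      \<le> sqrt (\<Sum>i\<in>{1..n}. \<Sum>j\<in>{1..n}. (B i j)\<^sup>2)"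
    by (simp add: sum_mono)
qed

lemma op_norm_ge_norm_image:
  assumes "(\<Sum>j\<in>{1..n}. (x j)\<^sup>2) \<le> 1"
  shows "sqrt (\<Sum>i\<in>{1..n}. (\<Sum>j\<in>{1..n}. B i j * x j)\<^sup>2) \<le> op_norm n B"
  unfolding op_norm_def using assms by (intro cSUP_upper[OF _ op_norm_bdd_above]) simp

lemma op_norm_nonneg: "0 \<le> op_norm n B"
  using op_norm_ge_norm_image[of "\<lambda>_. 0" n B] by simp

lemma column_norm_le_op_norm:
  assumes "j \<in> {1..n}"
  shows "sqrt (\<Sum>i\<in>{1..n}. (B i j)\<^sup>2) \<le> op_norm n B"
proof -
  define x where "x k = (if k = j then 1 else 0 :: real)" for k
  have "(\<Sum>k\<in>{1..n}. (x k)\<^sup>2) = (\<Sum>k\<in>{1..n}. if k = j then 1 else 0)"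
    and "(\<Sum>k\<in>{1..n}. B i k * x k) = (\<Sum>k\<in>{1..n}. if k = j then B i j else 0)" for i
    unfolding x_def by (intro sum.cong; simp)+
  then have "(\<Sum>k\<in>{1..n}. (x k)\<^sup>2) = 1" and "(\<Sum>k\<in>{1..n}. B i k * x k) = B i j" for i
    using assms by simp_all
  with op_norm_ge_norm_image[of x n B] show ?thesis by simp
qed

lemma abs_block_sum_le_op_norm:
  assumes S: "S \<subseteq> {1..n}" "S \<noteq> {}"
  shows "\<bar>\<Sum>i\<in>{1..n}. \<Sum>j\<in>S. B i j\<bar> \<le> sqrt (real n * real (card S)) * op_norm n B"
proof -
  define m where "m = real (card S)"
  have m: "0 < m" unfolding m_def using S finite_subset by fastforce
  define x where "x j = (if j \<in> S then 1 / sqrt m else 0)" for j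
  define v where "v i = (\<Sum>j\<in>{1..n}. B i j * x j)" for i
  have "(\<Sum>j\<in>{1..n}. (x j)\<^sup>2) = (\<Sum>j\<in>{1..n}. if j \<in> S then 1 / m else 0)"
    using m by (intro sum.cong) (auto simp: x_def power_divide)
  also have "\<dots> = (\<Sum>j\<in>S. 1 / m)"
    using S(1) by (simp add: sum.If_cases Int_absorb1)
  also have "\<dots> = 1" using m unfolding m_def by simp
  finally have "sqrt (\<Sum>i\<in>{1..n}. (v i)\<^sup>2) \<le> op_norm n B"
    unfolding v_def by (intro op_norm_ge_norm_image) simp
  moreover have "\<bar>\<Sum>i\<in>{1..n}. v i\<bar> \<le> sqrt (real n) * sqrt (\<Sum>i\<in>{1..n}. (v i)\<^sup>2)"
    using sum_squared_le_sum_of_squares[of v "{1..n}"]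
    by (metis mult.commute card_atLeastAtMost diff_Suc_1 real_sqrt_abs real_sqrt_le_mono real_sqrt_mult)
  ultimately have "\<bar>\<Sum>i\<in>{1..n}. v i\<bar> \<le> sqrt (real n) * op_norm n B"
    by (meson mult_left_mono order.trans real_sqrt_ge_zero of_nat_0_le_iff)
  moreover have "v i = (\<Sum>j\<in>S. B i j) / sqrt m" for i
  proof -
    have "v i = (\<Sum>j\<in>{1..n}. if j \<in> S then B i j / sqrt m else 0)"
      unfolding v_def x_def by (intro sum.cong) auto
    then show ?thesis
      using S(1) by (simp add: sum.If_cases Int_absorb1 sum_divide_distrib)
  qed
  ultimately show ?thesis
    using m by (simp add: sum_divide_distrib[symmetric] abs_div real_sqrt_mult m_def field_simps)
qed

lemma min_mod_norm_greatest:
  assumes "0 \<le> eps" and "\<And>C. C \<in> modifications n eps B \<Longrightarrow> L \<le> op_norm n C"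
  shows "L \<le> min_mod_norm n eps B"
  unfolding min_mod_norm_def
proof (rule cInf_greatest)
  have "B \<in> modifications n eps B"
    unfolding modifications_def using assms(1) by (intro CollectI exI[of _ "{}"]) auto
  then show "op_norm n ` modifications n eps B \<noteq> {}" by blast
qed (use assms(2) in blast)

lemma card_diff_ge:
  assumes "J \<subseteq> {1..n}" and "real (card J) \<le> eps * real n"
  shows "(1 - eps) * real n \<le> real (card ({1..n} - J))"
proof -
  have "card ({1..n} - J) = n - card J" and "card J \<le> n"
    using assms(1) by (auto simp: card_Diff_subset finite_subset dest: card_mono[rotated])
  then show ?thesis using assms(2) by (simp add: algebra_simps)
qed

lemma sum_diff_gt_of_deviation_less:
  fixes Y :: "nat \<Rightarrow> real"
  assumes "0 < \<nu>" and J: "J \<subseteq> {1..n}" "real (card J) \<le> eps * real n"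
    and dev: "(\<Sum>j\<in>{1..n}. \<bar>Y j - real n * \<nu>\<bar>) < (1 - eps) * \<nu> * (real n)\<^sup>2 / 2"
  shows "(1 - eps) * \<nu> * (real n)\<^sup>2 / 2 < (\<Sum>j\<in>{1..n} - J. Y j)"
proof -
  have "real (card ({1..n} - J)) * (real n * \<nu>) - (\<Sum>j\<in>{1..n}. \<bar>Y j - real n * \<nu>\<bar>)
      \<le> (\<Sum>j\<in>{1..n} - J. real n * \<nu> - \<bar>Y j - real n * \<nu>\<bar>)"
    using sum_mono2[of "{1..n}" "{1..n} - J" "\<lambda>j. \<bar>Y j - real n * \<nu>\<bar>"]
    by (simp add: sum_subtractf)
  also have "\<dots> \<le> (\<Sum>j\<in>{1..n} - J. Y j)"
    by (intro sum_mono) linarith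
  finally show ?thesis
    using card_diff_ge[OF J] dev mult_right_mono[OF card_diff_ge[OF J], of "real n * \<nu>"] \<open>0 < \<nu>\<close>
    by (simp add: power2_eq_square algebra_simps)
qed

lemma min_mod_norm_ge_of_column_sums:
  assumes "0 < \<nu>" "0 \<le> eps" "\<bar>s\<bar> \<le> 1"
    and dev: "column_deviation (\<lambda>x. s * x) \<nu> n B < (1 - eps) * \<nu> * (real n)\<^sup>2 / 2"
  shows "(1 - eps) * \<nu> * real n / 2 \<le> min_mod_norm n eps B"
proof (rule min_mod_norm_greatest[OF \<open>0 \<le> eps\<close>])
  fix C assume "C \<in> modifications n eps B"
  then obtain I J where J: "J \<subseteq> {1..n}" "real (card J) \<le> eps * real n"
    and CB: "\<And>i j. i \<in> {1..n} \<Longrightarrow> j \<in> {1..n} - J \<Longrightarrow> C i j = B i j"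
    unfolding modifications_def by auto
  define S where "S = {1..n} - J"
  have "(\<Sum>j\<in>S. \<Sum>i\<in>{1..n}. s * B i j) = s * (\<Sum>i\<in>{1..n}. \<Sum>j\<in>S. C i j)"
    by (subst sum.swap) (simp add: S_def CB sum_distrib_left)
  then have lower: "(1 - eps) * \<nu> * (real n)\<^sup>2 / 2 < s * (\<Sum>i\<in>{1..n}. \<Sum>j\<in>S. C i j)"
    using sum_diff_gt_of_deviation_less[OF \<open>0 < \<nu>\<close> J dev[unfolded column_deviation_def]]
    unfolding S_def by simp
  have pos: "0 < (1 - eps) * \<nu> * (real n)\<^sup>2 / 2"
    using dev column_deviation_nonneg[of "\<lambda>x. s * x" \<nu> n B] by linarith
  then have "0 < real n"
    by (cases n) auto
  have "S \<noteq> {}"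
    using lower pos by auto
  have "s * (\<Sum>i\<in>{1..n}. \<Sum>j\<in>S. C i j) \<le> \<bar>\<Sum>i\<in>{1..n}. \<Sum>j\<in>S. C i j\<bar>"
    using abs_ge_self[of "s * _"] mult_right_mono[OF \<open>\<bar>s\<bar> \<le> 1\<close> abs_ge_zero]
    unfolding abs_mult by (metis order.trans mult_1)
  also have "\<dots> \<le> sqrt (real n * real (card S)) * op_norm n C"
    using \<open>S \<noteq> {}\<close> by (intro abs_block_sum_le_op_norm) (auto simp: S_def)
  also have "\<dots> \<le> real n * op_norm n C"
  proof -
    have "card S \<le> n" unfolding S_def by (metis Diff_subset card_atLeastAtMost card_mono diff_Suc_1 finite_atLeastAtMost)
    then have "sqrt (real n * real (card S)) \<le> sqrt (real n * real n)"
      by (intro real_sqrt_le_mono mult_left_mono) auto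
    then show ?thesis using op_norm_nonneg by (intro mult_right_mono) auto
  qed
  finally have "((1 - eps) * \<nu> * real n / 2) * real n \<le> op_norm n C * real n"
    using less_imp_le[OF lower] by (simp add: power2_eq_square algebra_simps)
  then show "(1 - eps) * \<nu> * real n / 2 \<le> op_norm n C"
    using \<open>0 < real n\<close> by simp
qed

lemma min_mod_norm_ge_of_column_square_sums:
  assumes "0 < \<nu>" "0 \<le> eps" and h: "\<And>x. h x \<le> x\<^sup>2"
    and dev: "column_deviation h \<nu> n B < (1 - eps) * \<nu> * (real n)\<^sup>2 / 2"
  shows "sqrt ((1 - eps) * \<nu> * real n / 2) \<le> min_mod_norm n eps B"
proof (rule min_mod_norm_greatest[OF \<open>0 \<le> eps\<close>])
  fix C assume "C \<in> modifications n eps B"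
  then obtain I J where J: "J \<subseteq> {1..n}" "real (card J) \<le> eps * real n"
    and CB: "\<And>i j. i \<in> {1..n} \<Longrightarrow> j \<in> {1..n} - J \<Longrightarrow> C i j = B i j"
    unfolding modifications_def by auto
  define S where "S = {1..n} - J"
  define Y where "Y j = (\<Sum>i\<in>{1..n}. h (B i j))" for j
  have lower: "(1 - eps) * \<nu> * (real n)\<^sup>2 / 2 < (\<Sum>j\<in>S. Y j)"
    using sum_diff_gt_of_deviation_less[OF \<open>0 < \<nu>\<close> J dev[unfolded column_deviation_def]]
    unfolding S_def Y_def .
  have "card S \<le> n"
    unfolding S_def by (metis Diff_subset card_atLeastAtMost card_mono diff_Suc_1 finite_atLeastAtMost)
  have "0 < ((1 - eps) * \<nu> * real n) * real n"
    using dev column_deviation_nonneg[of h \<nu> n B] by (simp add: power2_eq_square)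
  then have "0 \<le> (1 - eps) * \<nu> * real n"
    by (metis linorder_not_le less_imp_le mult_nonpos_nonneg of_nat_0_le_iff)
  have "\<exists>j\<in>S. (1 - eps) * \<nu> * real n / 2 \<le> Y j"
  proof (rule ccontr)
    assume "\<not> ?thesis"
    then have "(\<Sum>j\<in>S. Y j) \<le> real (card S) * ((1 - eps) * \<nu> * real n / 2)"
      by (intro sum_bounded_above) auto
    also have "\<dots> \<le> real n * ((1 - eps) * \<nu> * real n / 2)"
      using \<open>card S \<le> n\<close> \<open>0 \<le> (1 - eps) * \<nu> * real n\<close> by (intro mult_right_mono) auto
    finally show False
      using lower by (simp add: power2_eq_square algebra_simps)
  qed
  then obtain j where j: "j \<in> S" "(1 - eps) * \<nu> * real n / 2 \<le> Y j" by blast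
  have "Y j \<le> (\<Sum>i\<in>{1..n}. (C i j)\<^sup>2)"
    unfolding Y_def using j(1) CB h by (intro sum_mono) (auto simp: S_def)
  with j(2) have "sqrt ((1 - eps) * \<nu> * real n / 2) \<le> sqrt (\<Sum>i\<in>{1..n}. (C i j)\<^sup>2)"
    by (intro real_sqrt_le_mono) linarith
  also have "\<dots> \<le> op_norm n C"
    using j(1) by (intro column_norm_le_op_norm) (auto simp: S_def)
  finally show "sqrt ((1 - eps) * \<nu> * real n / 2) \<le> op_norm n C" .
qed

section \<open>Second moments\<close>

lemma integrable_square_sum:
  fixes X :: "'i \<Rightarrow> 'a \<Rightarrow> real"
  assumes "finite S" and "\<And>s. s \<in> S \<Longrightarrow> X s \<in> borel_measurable M"
    and "\<And>s. s \<in> S \<Longrightarrow> integrable M (\<lambda>\<omega>. (X s \<omega>)\<^sup>2)"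
  shows "integrable M (\<lambda>\<omega>. (\<Sum>s\<in>S. X s \<omega>)\<^sup>2)"
proof (rule Bochner_Integration.integrable_bound)
  show "integrable M (\<lambda>\<omega>. (\<Sum>s\<in>S. (X s \<omega>)\<^sup>2) * real (card S))"
    using assms(3) by (intro integrable_mult_left Bochner_Integration.integrable_sum) auto
  show "AE \<omega> in M. norm ((\<Sum>s\<in>S. X s \<omega>)\<^sup>2) \<le> norm ((\<Sum>s\<in>S. (X s \<omega>)\<^sup>2) * real (card S))"
    using sum_squared_le_sum_of_squares by (intro AE_I2) (simp add: sum_nonneg)
  show "(\<lambda>\<omega>. (\<Sum>s\<in>S. X s \<omega>)\<^sup>2) \<in> borel_measurable M"
    using assms(2) by measurable
qed

lemma (in prob_space)
  fixes X :: "'a \<Rightarrow> real"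
  assumes "X \<in> borel_measurable M" and "integrable M (\<lambda>\<omega>. (X \<omega>)\<^sup>2)"
  shows expectation_le_sqrt_second_moment: "expectation X \<le> sqrt (expectation (\<lambda>\<omega>. (X \<omega>)\<^sup>2))"
    and variance_le_second_moment: "variance X \<le> expectation (\<lambda>\<omega>. (X \<omega>)\<^sup>2)"
proof -
  have "variance X = expectation (\<lambda>\<omega>. (X \<omega>)\<^sup>2) - (expectation X)\<^sup>2"
    using assms square_integrable_imp_integrable[OF assms] by (intro variance_eq)
  moreover note variance_positive[of X]
  ultimately show "expectation X \<le> sqrt (expectation (\<lambda>\<omega>. (X \<omega>)\<^sup>2))"
    and "variance X \<le> expectation (\<lambda>\<omega>. (X \<omega>)\<^sup>2)"
    by (simp_all add: real_le_rsqrt)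
qed

lemma (in prob_space) variance_sum_indep:
  fixes X :: "'i \<Rightarrow> 'a \<Rightarrow> real"
  assumes "finite S" and indep: "indep_vars (\<lambda>_. borel) X S"
    and square: "\<And>s. s \<in> S \<Longrightarrow> integrable M (\<lambda>\<omega>. (X s \<omega>)\<^sup>2)"
  shows "variance (\<lambda>\<omega>. \<Sum>s\<in>S. X s \<omega>) = (\<Sum>s\<in>S. variance (X s))"
proof -
  define Z where "Z s \<omega> = X s \<omega> - expectation (X s)" for s \<omega>
  have meas: "X s \<in> borel_measurable M" if "s \<in> S" for s
    using indep that unfolding indep_vars_def by auto
  have int: "integrable M (X s)" if "s \<in> S" for s
    using square_integrable_imp_integrable[OF meas[OF that] square[OF that]] .
  have indep_Z: "indep_vars (\<lambda>_. borel) Z S"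
    unfolding Z_def by (rule indep_vars_compose2[OF indep]) auto
  have product: "integrable M (\<lambda>\<omega>. Z s \<omega> * Z t \<omega>) \<and>
      expectation (\<lambda>\<omega>. Z s \<omega> * Z t \<omega>) = (if s = t then variance (X s) else 0)"
    if "s \<in> S" "t \<in> S" for s t
  proof (cases "s = t")
    case True
    then show ?thesis
      using int[OF that(1)] square[OF that(1)]
      by (simp add: Z_def power2_eq_square algebra_simps)
  next
    case False
    have indep_st: "indep_vars (\<lambda>_. borel) Z {s, t}"
      using that by (intro indep_vars_subset[OF indep_Z]) auto
    have int_Z: "\<And>i. i \<in> {s, t} \<Longrightarrow> integrable M (Z i)"
      using that int by (auto simp: Z_def[abs_def])
    have "(\<lambda>\<omega>. \<Prod>i\<in>{s, t}. Z i \<omega>) = (\<lambda>\<omega>. Z s \<omega> * Z t \<omega>)"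
      using False by auto
    moreover have "expectation (Z s) = 0"
      using int[OF that(1)] prob_space by (simp add: Z_def[abs_def])
    ultimately show ?thesis
      using False indep_vars_integrable[OF _ indep_st int_Z]
        indep_vars_lebesgue_integral[OF _ indep_st int_Z] by simp
  qed
  have "expectation (\<lambda>\<omega>. \<Sum>s\<in>S. X s \<omega>) = (\<Sum>s\<in>S. expectation (X s))"
    using int by (simp add: Bochner_Integration.integral_sum)
  then have "variance (\<lambda>\<omega>. \<Sum>s\<in>S. X s \<omega>) = expectation (\<lambda>\<omega>. (\<Sum>s\<in>S. Z s \<omega>)\<^sup>2)"
    by (simp add: Z_def sum_subtractf)
  also have "\<dots> = expectation (\<lambda>\<omega>. \<Sum>s\<in>S. \<Sum>t\<in>S. Z s \<omega> * Z t \<omega>)"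
    by (simp add: power2_eq_square sum_product)
  also have "\<dots> = (\<Sum>s\<in>S. \<Sum>t\<in>S. if s = t then variance (X s) else 0)"
    using product by (simp add: Bochner_Integration.integral_sum)
  finally show ?thesis
    using \<open>finite S\<close> by simp
qed

lemma (in finite_measure) integrable_square_diff_const:
  fixes X :: "'a \<Rightarrow> real"
  assumes "X \<in> borel_measurable M" and "integrable M (\<lambda>\<omega>. (X \<omega>)\<^sup>2)"
  shows "integrable M (\<lambda>\<omega>. (X \<omega> - c)\<^sup>2)"
  using square_integrable_imp_integrable[OF assms] assms(2) unfolding power2_diff by auto

lemma (in prob_space) truncated_second_moment_unbounded:
  fixes X :: "'a \<Rightarrow> real"
  assumes [measurable]: "X \<in> borel_measurable M" and "(\<integral>\<^sup>+ \<omega>. ennreal ((X \<omega>)\<^sup>2) \<partial>M) = \<infinity>"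
  shows "\<exists>T::nat. b < expectation (\<lambda>\<omega>. min ((X \<omega>)\<^sup>2) (real T))"
proof -
  have "(SUP T::nat. ennreal (min ((X \<omega>)\<^sup>2) (real T))) = ennreal ((X \<omega>)\<^sup>2)" for \<omega>
  proof (rule antisym)
    show "(SUP T::nat. ennreal (min ((X \<omega>)\<^sup>2) (real T))) \<le> ennreal ((X \<omega>)\<^sup>2)"
      by (rule SUP_least) (auto intro!: ennreal_leI)
    show "ennreal ((X \<omega>)\<^sup>2) \<le> (SUP T::nat. ennreal (min ((X \<omega>)\<^sup>2) (real T)))"
      by (intro SUP_upper2[where i = "nat \<lceil>(X \<omega>)\<^sup>2\<rceil>"]) (auto intro!: ennreal_leI)
  qed
  moreover have "(\<integral>\<^sup>+ \<omega>. (SUP T::nat. ennreal (min ((X \<omega>)\<^sup>2) (real T))) \<partial>M)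
      = (SUP T::nat. \<integral>\<^sup>+ \<omega>. ennreal (min ((X \<omega>)\<^sup>2) (real T)) \<partial>M)"
    by (rule nn_integral_monotone_convergence_SUP) (auto simp: incseq_def le_fun_def intro!: ennreal_leI)
  ultimately have SUP_infinite: "(SUP T::nat. \<integral>\<^sup>+ \<omega>. ennreal (min ((X \<omega>)\<^sup>2) (real T)) \<partial>M) = \<infinity>"
    using assms(2) by simp
  have "ennreal (max b 0) < (SUP T::nat. \<integral>\<^sup>+ \<omega>. ennreal (min ((X \<omega>)\<^sup>2) (real T)) \<partial>M)"
    unfolding SUP_infinite by simp
  then obtain T :: nat where T: "ennreal (max b 0) < (\<integral>\<^sup>+ \<omega>. ennreal (min ((X \<omega>)\<^sup>2) (real T)) \<partial>M)"
    unfolding less_SUP_iff by blast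
  have "(\<integral>\<^sup>+ \<omega>. ennreal (min ((X \<omega>)\<^sup>2) (real T)) \<partial>M) \<le> ennreal (real T)"
    using nn_integral_mono[of M "\<lambda>\<omega>. ennreal (min ((X \<omega>)\<^sup>2) (real T))" "\<lambda>_. ennreal (real T)"]
    by (simp add: ennreal_leI emeasure_space_1)
  then have "ennreal (expectation (\<lambda>\<omega>. min ((X \<omega>)\<^sup>2) (real T)))
      = (\<integral>\<^sup>+ \<omega>. ennreal (min ((X \<omega>)\<^sup>2) (real T)) \<partial>M)"
    by (subst integral_eq_nn_integral) (auto simp: ennreal_enn2real_if top_unique)
  with T have "max b 0 < expectation (\<lambda>\<omega>. min ((X \<omega>)\<^sup>2) (real T))"
    using ennreal_less_iff[of "max b 0" "expectation (\<lambda>\<omega>. min ((X \<omega>)\<^sup>2) (real T))"] by simp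
  then show ?thesis
    by auto
qed

section \<open>Random matrices with i.i.d. entries\<close>

lemma sum_Times_singleton: "(\<Sum>p\<in>I \<times> {j}. f p) = (\<Sum>i\<in>I. f (i, j))"
proof -
  have "I \<times> {j} = (\<lambda>i. (i, j)) ` I" by auto
  then show ?thesis by (simp add: sum.reindex inj_on_def)
qed

lemma filterlim_at_top_if_eventually_ge_nat:
  fixes f :: "'b \<Rightarrow> real"
  assumes "\<And>k::nat. eventually (\<lambda>x. real k \<le> f x) F"
  shows "filterlim f at_top F"
  unfolding filterlim_at_top
proof
  fix Z :: real
  show "eventually (\<lambda>x. Z \<le> f x) F"
    using assms[of "nat \<lceil>Z\<rceil>"] by (rule eventually_mono) linarith
qed

locale iid_random_matrices = prob_space +
  fixes xi :: "'a \<Rightarrow> real" and A :: "nat \<Rightarrow> nat \<Rightarrow> nat \<Rightarrow> 'a \<Rightarrow> real"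
  assumes xi_measurable [measurable]: "xi \<in> borel_measurable M"
    and indep_entries: "\<And>n. 1 \<le> n \<Longrightarrow> indep_vars (\<lambda>_. borel) (\<lambda>(i, j). A n i j) ({1..n} \<times> {1..n})"
    and distr_entries: "\<And>n i j. 1 \<le> n \<Longrightarrow> i \<in> {1..n} \<Longrightarrow> j \<in> {1..n} \<Longrightarrow>
                          distr M borel (A n i j) = distr M borel xi"
begin

abbreviation sample_column_deviation :: "(real \<Rightarrow> real) \<Rightarrow> nat \<Rightarrow> 'a \<Rightarrow> real" where
  "sample_column_deviation h n \<omega> \<equiv>
     column_deviation h (expectation (\<lambda>\<omega>. h (xi \<omega>))) n (\<lambda>i j. A n i j \<omega>)"

lemma entry_measurable: "i \<in> {1..n} \<Longrightarrow> j \<in> {1..n} \<Longrightarrow> A n i j \<in> borel_measurable M"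
  using indep_entries[of n] unfolding indep_vars_def by auto

lemma
  fixes g :: "real \<Rightarrow> real"
  assumes "i \<in> {1..n}" "j \<in> {1..n}" and [measurable]: "g \<in> borel_measurable borel"
  shows integrable_entry_iff: "integrable M (\<lambda>\<omega>. g (A n i j \<omega>)) \<longleftrightarrow> integrable M (\<lambda>\<omega>. g (xi \<omega>))"
    and expectation_entry: "expectation (\<lambda>\<omega>. g (A n i j \<omega>)) = expectation (\<lambda>\<omega>. g (xi \<omega>))"
proof -
  have A: "A n i j \<in> borel_measurable M"
    using assms by (intro entry_measurable)
  have "distr M borel (A n i j) = distr M borel xi"
    using assms by (intro distr_entries) auto
  then show "integrable M (\<lambda>\<omega>. g (A n i j \<omega>)) \<longleftrightarrow> integrable M (\<lambda>\<omega>. g (xi \<omega>))"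
    and "expectation (\<lambda>\<omega>. g (A n i j \<omega>)) = expectation (\<lambda>\<omega>. g (xi \<omega>))"
    using integrable_distr_eq[OF A assms(3)] integrable_distr_eq[OF xi_measurable assms(3)]
      integral_distr[OF A assms(3)] integral_distr[OF xi_measurable assms(3)] by simp_all
qed

lemma indep_transformed_entries:
  assumes "1 \<le> n" and "h \<in> borel_measurable borel"
  shows "indep_vars (\<lambda>_. borel) (\<lambda>p \<omega>. h (A n (fst p) (snd p) \<omega>)) ({1..n} \<times> {1..n})"
  using indep_vars_compose2[OF indep_entries[OF assms(1)], of "\<lambda>_. h"] assms(2)
  by (simp add: case_prod_beta')

lemma column_sum_moments:
  fixes h :: "real \<Rightarrow> real"
  assumes j: "j \<in> {1..n}" and h [measurable]: "h \<in> borel_measurable borel"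
    and square: "integrable M (\<lambda>\<omega>. (h (xi \<omega>))\<^sup>2)"
  shows "expectation (\<lambda>\<omega>. \<Sum>i\<in>{1..n}. h (A n i j \<omega>)) = real n * expectation (\<lambda>\<omega>. h (xi \<omega>))"
    and "variance (\<lambda>\<omega>. \<Sum>i\<in>{1..n}. h (A n i j \<omega>)) = real n * variance (\<lambda>\<omega>. h (xi \<omega>))"
    and "integrable M (\<lambda>\<omega>. (\<Sum>i\<in>{1..n}. h (A n i j \<omega>))\<^sup>2)"
proof -
  define F where "F p \<omega> = h (A n (fst p) (snd p) \<omega>)" for p \<omega>
  define K where "K = {1..n} \<times> {j}"
  have K: "K \<subseteq> {1..n} \<times> {1..n}" "finite K"
    using j by (auto simp: K_def)
  have column: "(\<Sum>i\<in>{1..n}. h (A n i j \<omega>)) = (\<Sum>p\<in>K. F p \<omega>)" for \<omega>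
    unfolding K_def F_def sum_Times_singleton by simp
  have int: "integrable M (\<lambda>\<omega>. h (xi \<omega>))"
    by (rule square_integrable_imp_integrable[OF _ square]) simp
  have entry: "expectation (\<lambda>\<omega>. g (F p \<omega>)) = expectation (\<lambda>\<omega>. g (h (xi \<omega>)))"
    "integrable M (\<lambda>\<omega>. g (F p \<omega>)) \<longleftrightarrow> integrable M (\<lambda>\<omega>. g (h (xi \<omega>)))"
    if "p \<in> K" "g \<in> borel_measurable borel" for p and g :: "real \<Rightarrow> real"
    using that K(1) expectation_entry[of "fst p" n "snd p" "\<lambda>x. g (h x)"]
      integrable_entry_iff[of "fst p" n "snd p" "\<lambda>x. g (h x)"] by (auto simp: F_def)
  show "expectation (\<lambda>\<omega>. \<Sum>i\<in>{1..n}. h (A n i j \<omega>)) = real n * expectation (\<lambda>\<omega>. h (xi \<omega>))"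
    unfolding column using entry(1)[of _ "\<lambda>x. x"] entry(2)[of _ "\<lambda>x. x"] int
    by (simp add: Bochner_Integration.integral_sum K_def)
  have F_measurable: "F p \<in> borel_measurable M" if "p \<in> K" for p
    using that K(1) entry_measurable[of "fst p" n "snd p"] unfolding F_def by auto
  show "integrable M (\<lambda>\<omega>. (\<Sum>i\<in>{1..n}. h (A n i j \<omega>))\<^sup>2)"
    unfolding column using F_measurable entry(2)[of _ "\<lambda>x. x\<^sup>2"] square
    by (intro integrable_square_sum[OF K(2)]) auto
  have indep: "indep_vars (\<lambda>_. borel) F K"
    using j indep_vars_subset[OF indep_transformed_entries[OF _ h] K(1)] unfolding F_def by auto
  have "variance (\<lambda>\<omega>. \<Sum>p\<in>K. F p \<omega>) = (\<Sum>p\<in>K. variance (F p))"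
    using entry(2)[of _ "\<lambda>x. x\<^sup>2"] square by (intro variance_sum_indep[OF K(2) indep]) auto
  also have "\<dots> = (\<Sum>p\<in>K. variance (\<lambda>\<omega>. h (xi \<omega>)))"
    using entry(1)[of _ "\<lambda>x. x"] entry(1)[of _ "\<lambda>x. (x - expectation (\<lambda>\<omega>. h (xi \<omega>)))\<^sup>2"]
    by (intro sum.cong) auto
  also have "\<dots> = real n * variance (\<lambda>\<omega>. h (xi \<omega>))"
    by (simp add: K_def)
  finally show "variance (\<lambda>\<omega>. \<Sum>i\<in>{1..n}. h (A n i j \<omega>)) = real n * variance (\<lambda>\<omega>. h (xi \<omega>))"
    by (simp only: column)
qed

lemma indep_column_sums:
  fixes h :: "real \<Rightarrow> real"
  assumes "1 \<le> n" and "h \<in> borel_measurable borel"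
  shows "indep_vars (\<lambda>_. borel) (\<lambda>j \<omega>. \<Sum>i\<in>{1..n}. h (A n i j \<omega>)) {1..n}"
proof -
  define K where "K j = {1..n} \<times> {j}" for j :: nat
  have "indep_vars (\<lambda>j. Pi\<^sub>M (K j) (\<lambda>_. borel))
      (\<lambda>j \<omega>. restrict (\<lambda>p. h (A n (fst p) (snd p) \<omega>)) (K j)) {1..n}"
    by (rule indep_vars_restrict[OF indep_transformed_entries[OF assms]])
       (auto simp: K_def disjoint_family_on_def)
  moreover have "(\<lambda>f :: nat \<times> nat \<Rightarrow> real. \<Sum>p\<in>K j. f p) \<in> borel_measurable (Pi\<^sub>M (K j) (\<lambda>_. borel))"
    for j unfolding K_def by measurable
  ultimately have "indep_vars (\<lambda>_. borel)
      (\<lambda>j \<omega>. \<Sum>p\<in>K j. restrict (\<lambda>p. h (A n (fst p) (snd p) \<omega>)) (K j) p) {1..n}"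
    by (rule indep_vars_compose2[where Y = "\<lambda>j f. \<Sum>p\<in>K j. f p"])
  then show ?thesis
    by (rule indep_vars_cong[THEN iffD1, rotated 3]) (auto simp: K_def sum_Times_singleton)
qed

lemma column_deviation_moments:
  fixes h :: "real \<Rightarrow> real"
  assumes "1 \<le> n" and h [measurable]: "h \<in> borel_measurable borel"
    and square: "integrable M (\<lambda>\<omega>. (h (xi \<omega>))\<^sup>2)"
  defines "v \<equiv> variance (\<lambda>\<omega>. h (xi \<omega>))" and "D \<equiv> sample_column_deviation h n"
  shows "D \<in> borel_measurable M" and "integrable M (\<lambda>\<omega>. (D \<omega>)\<^sup>2)"
    and "expectation D \<le> real n * sqrt (real n * v)" and "variance D \<le> (real n)\<^sup>2 * v"
proof -
  define \<nu> where "\<nu> = expectation (\<lambda>\<omega>. h (xi \<omega>))"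
  define S where "S j \<omega> = (\<Sum>i\<in>{1..n}. h (A n i j \<omega>))" for j \<omega>
  define dev where "dev j \<omega> = \<bar>S j \<omega> - real n * \<nu>\<bar>" for j \<omega>
  have D: "D = (\<lambda>\<omega>. \<Sum>j\<in>{1..n}. dev j \<omega>)"
    by (simp add: D_def dev_def S_def \<nu>_def column_deviation_def)
  have S_measurable: "S j \<in> borel_measurable M" if "j \<in> {1..n}" for j
    unfolding S_def using that entry_measurable[of _ n j] by measurable
  then have dev_measurable: "dev j \<in> borel_measurable M" if "j \<in> {1..n}" for j
    unfolding dev_def using that by measurable
  have dev_square: "(\<lambda>\<omega>. (dev j \<omega>)\<^sup>2) = (\<lambda>\<omega>. (S j \<omega> - expectation (S j))\<^sup>2)"
    if "j \<in> {1..n}" for j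
    using column_sum_moments(1)[OF that h square] by (simp add: dev_def S_def[abs_def] \<nu>_def)
  have dev_integrable: "integrable M (\<lambda>\<omega>. (dev j \<omega>)\<^sup>2)" if "j \<in> {1..n}" for j
    unfolding dev_square[OF that] using column_sum_moments(3)[OF that h square]
    by (intro integrable_square_diff_const S_measurable that) (simp add: S_def)
  have dev_second_moment: "expectation (\<lambda>\<omega>. (dev j \<omega>)\<^sup>2) = real n * v" if "j \<in> {1..n}" for j
    unfolding dev_square[OF that] using column_sum_moments(2)[OF that h square] by (simp add: S_def[abs_def] v_def)
  have indep: "indep_vars (\<lambda>_. borel) dev {1..n}"
    unfolding dev_def S_def
    by (rule indep_vars_compose2[OF indep_column_sums[OF \<open>1 \<le> n\<close> h], where Y = "\<lambda>_ x. \<bar>x - real n * \<nu>\<bar>"]) simp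
  show "D \<in> borel_measurable M"
    unfolding D using dev_measurable by measurable
  show "integrable M (\<lambda>\<omega>. (D \<omega>)\<^sup>2)"
    unfolding D using dev_measurable dev_integrable by (intro integrable_square_sum) auto
  have "expectation D = (\<Sum>j\<in>{1..n}. expectation (dev j))"
    unfolding D using square_integrable_imp_integrable[OF dev_measurable dev_integrable]
    by (intro Bochner_Integration.integral_sum) auto
  also have "\<dots> \<le> (\<Sum>j\<in>{1..n}. sqrt (real n * v))"
    using dev_measurable dev_integrable dev_second_moment
    by (intro sum_mono) (simp add: expectation_le_sqrt_second_moment flip: dev_second_moment)
  finally show "expectation D \<le> real n * sqrt (real n * v)"
    by simp
  have "variance D = (\<Sum>j\<in>{1..n}. variance (dev j))"
    unfolding D using dev_integrable by (intro variance_sum_indep indep) auto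
  also have "\<dots> \<le> (\<Sum>j\<in>{1..n}. real n * v)"
    using dev_measurable dev_integrable dev_second_moment
    by (intro sum_mono) (simp add: variance_le_second_moment flip: dev_second_moment)
  finally show "variance D \<le> (real n)\<^sup>2 * v"
    by (simp add: power2_eq_square)
qed

lemma prob_column_deviation_ge:
  fixes h :: "real \<Rightarrow> real"
  assumes "1 \<le> n" and h [measurable]: "h \<in> borel_measurable borel"
    and square: "integrable M (\<lambda>\<omega>. (h (xi \<omega>))\<^sup>2)"
    and "0 < \<delta>" and large: "4 * variance (\<lambda>\<omega>. h (xi \<omega>)) / \<delta>\<^sup>2 \<le> real n"
  defines "E \<equiv> {\<omega>\<in>space M. \<delta> * (real n)\<^sup>2 \<le> sample_column_deviation h n \<omega>}"
  shows "E \<in> events" and "prob E \<le> 4 * variance (\<lambda>\<omega>. h (xi \<omega>)) / (\<delta>\<^sup>2 * (real n)\<^sup>2)"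
proof -
  define v where "v = variance (\<lambda>\<omega>. h (xi \<omega>))"
  define D where "D = sample_column_deviation h n"
  note moments = column_deviation_moments[OF \<open>1 \<le> n\<close> h square, folded v_def D_def]
  have [measurable]: "D \<in> borel_measurable M"
    by (fact moments(1))
  have E: "E = {\<omega>\<in>space M. \<delta> * (real n)\<^sup>2 \<le> D \<omega>}"
    by (simp add: E_def D_def)
  show "E \<in> events"
    unfolding E by measurable
  have n: "0 < real n"
    using \<open>1 \<le> n\<close> by simp
  have "sqrt (real n * v) \<le> \<delta> * real n / 2"
  proof (rule real_le_lsqrt)
    show "real n * v \<le> (\<delta> * real n / 2)\<^sup>2"
      using large[folded v_def] \<open>0 < \<delta>\<close> n by (simp add: field_simps power2_eq_square)
  qed (use \<open>0 < \<delta>\<close> n v_def variance_positive in auto)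
  then have "expectation D \<le> real n * (\<delta> * real n / 2)"
    using moments(3) n by (meson mult_left_mono of_nat_0_le_iff order.trans)
  then have "expectation D \<le> \<delta> * (real n)\<^sup>2 / 2"
    by (simp add: power2_eq_square mult.left_commute)
  then have "E \<subseteq> {\<omega>\<in>space M. \<delta> * (real n)\<^sup>2 / 2 \<le> \<bar>D \<omega> - expectation D\<bar>}"
    unfolding E by (auto simp: abs_if)
  then have "prob E \<le> prob {\<omega>\<in>space M. \<delta> * (real n)\<^sup>2 / 2 \<le> \<bar>D \<omega> - expectation D\<bar>}"
    by (intro finite_measure_mono) measurable
  also have "\<dots> \<le> variance D / (\<delta> * (real n)\<^sup>2 / 2)\<^sup>2"
    using moments(1,2) \<open>0 < \<delta>\<close> n by (intro Chebyshev_inequality) (auto simp: D_def)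
  also have "\<dots> \<le> (real n)\<^sup>2 * v / (\<delta> * (real n)\<^sup>2 / 2)\<^sup>2"
    using moments(4) by (intro divide_right_mono) (auto simp: D_def)
  also have "\<dots> = 4 * v / (\<delta>\<^sup>2 * (real n)\<^sup>2)"
    using n \<open>0 < \<delta>\<close> by (simp add: power2_eq_square field_simps)
  finally show "prob E \<le> 4 * variance (\<lambda>\<omega>. h (xi \<omega>)) / (\<delta>\<^sup>2 * (real n)\<^sup>2)"
    unfolding v_def .
qed

lemma AE_eventually_column_deviation_less:
  fixes h :: "real \<Rightarrow> real"
  assumes h [measurable]: "h \<in> borel_measurable borel"
    and square: "integrable M (\<lambda>\<omega>. (h (xi \<omega>))\<^sup>2)" and "0 < \<delta>"
  shows "AE \<omega> in M. eventually (\<lambda>n. sample_column_deviation h n \<omega> < \<delta> * (real n)\<^sup>2) sequentially"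
proof -
  define v where "v = variance (\<lambda>\<omega>. h (xi \<omega>))"
  define N where "N = nat \<lceil>4 * v / \<delta>\<^sup>2\<rceil> + 1"
  define E where "E n = (if N \<le> n then {\<omega>\<in>space M. \<delta> * (real n)\<^sup>2 \<le> sample_column_deviation h n \<omega>} else {})" for n
  have large: "1 \<le> n \<and> 4 * v / \<delta>\<^sup>2 \<le> real n" if "N \<le> n" for n
    using that unfolding N_def by linarith
  note bound = prob_column_deviation_ge[OF _ h square \<open>0 < \<delta>\<close>, folded v_def]
  have events: "E n \<in> events" for n
    using bound(1) large unfolding E_def by auto
  have "summable (\<lambda>n. prob (E n))"
  proof (rule summable_comparison_test')
    show "summable (\<lambda>n. 4 * v / \<delta>\<^sup>2 * inverse (real n ^ 2))"
      by (intro summable_mult inverse_power_summable) simp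
    show "norm (prob (E n)) \<le> 4 * v / \<delta>\<^sup>2 * inverse (real n ^ 2)" if "N \<le> n" for n
      using bound(2)[of n] large[OF that] that unfolding E_def by (simp add: field_simps)
  qed
  then have "AE \<omega> in M. eventually (\<lambda>n. \<omega> \<in> space M - E n) sequentially"
    using events by (intro borel_cantelli_AE1) (auto simp: less_top[symmetric])
  then show ?thesis
  proof (rule AE_mp, intro AE_I2 impI)
    fix \<omega> assume "\<forall>\<^sub>F n in sequentially. \<omega> \<in> space M - E n"
    with eventually_ge_at_top[of N]
    show "\<forall>\<^sub>F n in sequentially. sample_column_deviation h n \<omega> < \<delta> * (real n)\<^sup>2"
      by eventually_elim (auto simp: E_def)
  qed
qed

lemma AE_eventually_min_mod_norm_ge_sqrt:
  fixes h :: "real \<Rightarrow> real"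
  assumes h [measurable]: "h \<in> borel_measurable borel" and h_le: "\<And>x. h x \<le> x\<^sup>2"
    and square: "integrable M (\<lambda>\<omega>. (h (xi \<omega>))\<^sup>2)"
    and pos: "0 < expectation (\<lambda>\<omega>. h (xi \<omega>))" and eps: "0 \<le> eps" "eps < 1"
  shows "AE \<omega> in M. eventually (\<lambda>n. sqrt ((1 - eps) * expectation (\<lambda>\<omega>. h (xi \<omega>)) / 2)
           \<le> min_mod_norm n eps (\<lambda>i j. A n i j \<omega>) / sqrt (real n)) sequentially"
proof -
  define \<nu> where "\<nu> = expectation (\<lambda>\<omega>. h (xi \<omega>))"
  have "0 < (1 - eps) * \<nu> / 2"
    using pos eps by (simp add: \<nu>_def)
  from AE_eventually_column_deviation_less[OF h square this]
  show ?thesis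
    unfolding \<nu>_def[symmetric]
  proof (rule AE_mp, intro AE_I2 impI)
    fix \<omega>
    assume "\<forall>\<^sub>F n in sequentially.
      column_deviation h \<nu> n (\<lambda>i j. A n i j \<omega>) < (1 - eps) * \<nu> / 2 * (real n)\<^sup>2"
    with eventually_ge_at_top[of 1]
    show "\<forall>\<^sub>F n in sequentially.
      sqrt ((1 - eps) * \<nu> / 2) \<le> min_mod_norm n eps (\<lambda>i j. A n i j \<omega>) / sqrt (real n)"
    proof eventually_elim
      case (elim n)
      then have "sqrt ((1 - eps) * \<nu> * real n / 2) \<le> min_mod_norm n eps (\<lambda>i j. A n i j \<omega>)"
        using pos eps h_le by (intro min_mod_norm_ge_of_column_square_sums) (auto simp: \<nu>_def)
      moreover have "sqrt ((1 - eps) * \<nu> * real n / 2) = sqrt ((1 - eps) * \<nu> / 2) * sqrt (real n)"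
        by (simp add: real_sqrt_mult[symmetric])
      ultimately show ?case
        using elim by (simp add: pos_le_divide_eq)
    qed
  qed
qed

lemma AE_eventually_min_mod_norm_ge_linear:
  assumes square: "integrable M (\<lambda>\<omega>. (xi \<omega>)\<^sup>2)" and "\<bar>s\<bar> \<le> 1"
    and pos: "0 < expectation (\<lambda>\<omega>. s * xi \<omega>)" and eps: "0 \<le> eps" "eps < 1"
  shows "AE \<omega> in M. eventually (\<lambda>n. (1 - eps) * expectation (\<lambda>\<omega>. s * xi \<omega>) / 2 * sqrt (real n)
           \<le> min_mod_norm n eps (\<lambda>i j. A n i j \<omega>) / sqrt (real n)) sequentially"
proof -
  define \<nu> where "\<nu> = expectation (\<lambda>\<omega>. s * xi \<omega>)"
  have "0 < (1 - eps) * \<nu> / 2"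
    using pos eps by (simp add: \<nu>_def)
  moreover have "integrable M (\<lambda>\<omega>. (s * xi \<omega>)\<^sup>2)"
    using square by (simp add: power_mult_distrib)
  ultimately have "AE \<omega> in M. \<forall>\<^sub>F n in sequentially.
      sample_column_deviation (\<lambda>x. s * x) n \<omega> < (1 - eps) * \<nu> / 2 * (real n)\<^sup>2"
    by (intro AE_eventually_column_deviation_less) auto
  then show ?thesis
    unfolding \<nu>_def[symmetric]
  proof (rule AE_mp, intro AE_I2 impI)
    fix \<omega>
    assume "\<forall>\<^sub>F n in sequentially.
      column_deviation (\<lambda>x. s * x) \<nu> n (\<lambda>i j. A n i j \<omega>) < (1 - eps) * \<nu> / 2 * (real n)\<^sup>2"
    with eventually_ge_at_top[of 1]
    show "\<forall>\<^sub>F n in sequentially.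
      (1 - eps) * \<nu> / 2 * sqrt (real n) \<le> min_mod_norm n eps (\<lambda>i j. A n i j \<omega>) / sqrt (real n)"
    proof eventually_elim
      case (elim n)
      then have "(1 - eps) * \<nu> * real n / 2 \<le> min_mod_norm n eps (\<lambda>i j. A n i j \<omega>)"
        using pos eps \<open>\<bar>s\<bar> \<le> 1\<close> by (intro min_mod_norm_ge_of_column_sums) (auto simp: \<nu>_def)
      then show ?case
        using elim by (simp add: pos_le_divide_eq mult.assoc)
    qed
  qed
qed

lemma AE_filterlim_min_mod_norm_of_infinite_second_moment:
  assumes infinite: "(\<integral>\<^sup>+ \<omega>. ennreal ((xi \<omega>)\<^sup>2) \<partial>M) = \<infinity>" and eps: "0 \<le> eps" "eps < 1"
  shows "AE \<omega> in M. filterlim (\<lambda>n. min_mod_norm n eps (\<lambda>i j. A n i j \<omega>) / sqrt (real n)) at_top sequentially"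
proof -
  have "AE \<omega> in M. eventually (\<lambda>n. real k \<le> min_mod_norm n eps (\<lambda>i j. A n i j \<omega>) / sqrt (real n)) sequentially"
    for k :: nat
  proof -
    obtain T :: nat where T: "2 * (real k)\<^sup>2 / (1 - eps) < expectation (\<lambda>\<omega>. min ((xi \<omega>)\<^sup>2) (real T))"
      using truncated_second_moment_unbounded[OF xi_measurable infinite] by blast
    define h where "h x = min (x\<^sup>2) (real T)" for x :: real
    have [measurable]: "h \<in> borel_measurable borel"
      unfolding h_def by measurable
    have large: "2 * (real k)\<^sup>2 < (1 - eps) * expectation (\<lambda>\<omega>. h (xi \<omega>))"
      using T eps by (simp add: h_def field_simps)
    then have k: "real k \<le> sqrt ((1 - eps) * expectation (\<lambda>\<omega>. h (xi \<omega>)) / 2)"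
      by (intro real_le_rsqrt) simp
    have "0 < (1 - eps) * expectation (\<lambda>\<omega>. h (xi \<omega>))"
      using large zero_le_power2[of "real k"] by linarith
    then have "0 < expectation (\<lambda>\<omega>. h (xi \<omega>))"
      using eps by (simp add: zero_less_mult_iff)
    moreover have "integrable M (\<lambda>\<omega>. (h (xi \<omega>))\<^sup>2)"
      by (rule integrable_const_bound[where B = "(real T)\<^sup>2"]) (auto simp: h_def intro!: power_mono)
    ultimately have "AE \<omega> in M. eventually (\<lambda>n. sqrt ((1 - eps) * expectation (\<lambda>\<omega>. h (xi \<omega>)) / 2)
        \<le> min_mod_norm n eps (\<lambda>i j. A n i j \<omega>) / sqrt (real n)) sequentially"
      using eps by (intro AE_eventually_min_mod_norm_ge_sqrt) (auto simp: h_def)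
    then show ?thesis
      by eventually_elim (auto elim: eventually_mono intro: order.trans[OF k])
  qed
  then have "AE \<omega> in M. \<forall>k::nat. \<forall>\<^sub>F n in sequentially.
      real k \<le> min_mod_norm n eps (\<lambda>i j. A n i j \<omega>) / sqrt (real n)"
    by (simp add: AE_all_countable)
  then show ?thesis
    by eventually_elim (auto intro: filterlim_at_top_if_eventually_ge_nat)
qed

lemma AE_filterlim_min_mod_norm_of_nonzero_mean:
  assumes finite: "(\<integral>\<^sup>+ \<omega>. ennreal ((xi \<omega>)\<^sup>2) \<partial>M) < \<infinity>" and mean: "expectation xi \<noteq> 0"
    and eps: "0 \<le> eps" "eps < 1"
  shows "AE \<omega> in M. filterlim (\<lambda>n. min_mod_norm n eps (\<lambda>i j. A n i j \<omega>) / sqrt (real n)) at_top sequentially"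
proof -
  define s where "s = sgn (expectation xi)"
  have square: "integrable M (\<lambda>\<omega>. (xi \<omega>)\<^sup>2)"
    using finite by (intro integrableI_bounded) auto
  have "expectation (\<lambda>\<omega>. s * xi \<omega>) = \<bar>expectation xi\<bar>"
    by (simp add: s_def sgn_if abs_if)
  then have pos: "0 < expectation (\<lambda>\<omega>. s * xi \<omega>)"
    using mean by simp
  have "\<bar>s\<bar> \<le> 1"
    by (simp add: s_def abs_sgn_eq)
  have lim: "filterlim (\<lambda>n::nat. (1 - eps) * expectation (\<lambda>\<omega>. s * xi \<omega>) / 2 * sqrt (real n)) at_top sequentially"
    using pos eps
    by (intro filterlim_tendsto_pos_mult_at_top[OF tendsto_const] filterlim_compose[OF sqrt_at_top filterlim_real_sequentially]) auto
  show ?thesis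
    using AE_eventually_min_mod_norm_ge_linear[OF square \<open>\<bar>s\<bar> \<le> 1\<close> pos eps]
    by (rule eventually_mono) (rule filterlim_at_top_mono[OF lim])
qed

end

theorem mainTheorem2:
  fixes M :: "'a measure"
    and xi :: "'a \<Rightarrow> real"
    and A :: "nat \<Rightarrow> nat \<Rightarrow> nat \<Rightarrow> 'a \<Rightarrow> real"
    and eps :: real
  assumes "prob_space M"
    and "xi \<in> borel_measurable M"
    and "(\<integral>\<^sup>+ \<omega>. ennreal ((xi \<omega>)\<^sup>2) \<partial>M) = \<infinity> \<or>
         ((\<integral>\<^sup>+ \<omega>. ennreal ((xi \<omega>)\<^sup>2) \<partial>M) < \<infinity> \<and> (\<integral>\<omega>. xi \<omega> \<partial>M) \<noteq> 0)"
    and "\<And>n. n \<ge> 1 \<Longrightarrow> prob_space.indep_vars M (\<lambda>_. borel) (\<lambda>(i, j). A n i j)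
                              ({1..n} \<times> {1..n})"
    and "\<And>n i j. n \<ge> 1 \<Longrightarrow> i \<in> {1..n} \<Longrightarrow> j \<in> {1..n} \<Longrightarrow>
            distr M borel (A n i j) = distr M borel xi"
    and "0 < eps" and "eps < 1"
  shows "AE \<omega> in M. filterlim (\<lambda>n. min_mod_norm n eps (\<lambda>i j. A n i j \<omega>) / sqrt (real n))
                       at_top sequentially"
proof -
  interpret iid_random_matrices M xi A
    using assms(1,2,4,5) by (simp add: iid_random_matrices_def iid_random_matrices_axioms_def)
  have eps: "0 \<le> eps" "eps < 1"
    using assms(6,7) by simp_all
  from assms(3) show ?thesis
    using AE_filterlim_min_mod_norm_of_infinite_second_moment[OF _ eps]
      AE_filterlim_min_mod_norm_of_nonzero_mean[OF _ _ eps] by blast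
qed

end
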